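(* Let $A\in\mathfrak S'_n$ be a matrix with entries in $\mathbb{Z}[\sqrt2]$ whose diagonal entries all lie in $\mathbb{Z}$, and let $G$ be its associated weighted graph. Then every cycle of $G$ contains an even number of edges of weight $\pm\sqrt2$. Hence $A\in\mathfrak S_n$.
   Context: Let $\mathcal R$ be the compositum of all real quadratic integer rings. For a symmetric $\mathcal R$-matrix $A$, let $L_A$ be the smallest normal extension of $\mathbb{Q}$ containing all entries of $A$. $\mathfrak S'_n$ is the set of $n\times n$ indecomposable symmetric $\mathcal R$-matrices $A$ such that for every $\sigma\in\operatorname{Gal}(L_A/\mathbb{Q})$ all eigenvalues of $\sigma(A)$ ($\sigma$ applied entrywise) lie in $[-2,2]$; $\mathfrak S_n$ is the subset of those with characteristic polynomial in $\mathbb{Z}[x]$. A matrix is indecomposable if its underlying graph is connected. The associated weighted graph $G$ of a symmetric matrix $A=(a_{uv})$ has vertex set the indices, an edge $uv$ ($u\ne v$) of weight $a_{uv}$ whenever $a_{uv}\neq0$, and charge $a_{vv}$ at vertex $v$; a cycle of $G$ is a cycle in this underlying simple graph. *)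

theory Defs
  imports "Jordan_Normal_Form.Char_Poly" "HOL-Computational_Algebra.Polynomial"
begin

definition zsqrt2_mat :: "nat \<Rightarrow> (nat \<Rightarrow> nat \<Rightarrow> int) \<Rightarrow> (nat \<Rightarrow> nat \<Rightarrow> int) \<Rightarrow> real mat" where
  "zsqrt2_mat n p q = mat n n (\<lambda>(i,j). of_int (p i j) + sqrt 2 * of_int (q i j))"

definition zsqrt2_conj_mat :: "nat \<Rightarrow> (nat \<Rightarrow> nat \<Rightarrow> int) \<Rightarrow> (nat \<Rightarrow> nat \<Rightarrow> int) \<Rightarrow> real mat" where
  "zsqrt2_conj_mat n p q = mat n n (\<lambda>(i,j). of_int (p i j) - sqrt 2 * of_int (q i j))"

definition symmetric_mat :: "real mat \<Rightarrow> bool" where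
  "symmetric_mat A \<longleftrightarrow> A \<in> carrier_mat (dim_row A) (dim_row A) \<and>
     (\<forall>i < dim_row A. \<forall>j < dim_row A. A $$ (i,j) = A $$ (j,i))"

definition adj :: "real mat \<Rightarrow> nat \<Rightarrow> nat \<Rightarrow> bool" where
  "adj A u v \<longleftrightarrow> u < dim_row A \<and> v < dim_row A \<and> u \<noteq> v \<and> A $$ (u,v) \<noteq> 0"

definition indecomposable :: "real mat \<Rightarrow> bool" where
  "indecomposable A \<longleftrightarrow>
     (\<forall>u < dim_row A. \<forall>v < dim_row A. (u, v) \<in> {(x,y). adj A x y}\<^sup>*)"

definition eigs_in_interval :: "real mat \<Rightarrow> bool" where
  "eigs_in_interval A \<longleftrightarrow>
     (\<forall>\<mu>. eigenvalue (map_mat complex_of_real A) \<mu> \<longrightarrow> \<mu> \<in> \<real> \<and> -2 \<le> Re \<mu> \<and> Re \<mu> \<le> 2)"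

definition is_cycle :: "real mat \<Rightarrow> nat list \<Rightarrow> bool" where
  "is_cycle A c \<longleftrightarrow> length c \<ge> 3 \<and> distinct c \<and>
     (\<forall>t < length c. adj A (c ! t) (c ! ((t + 1) mod length c)))"

definition num_sqrt2_edges :: "real mat \<Rightarrow> nat list \<Rightarrow> nat" where
  "num_sqrt2_edges A c =
     card {t. t < length c \<and> \<bar>A $$ (c ! t, c ! ((t + 1) mod length c))\<bar> = sqrt 2}"

end

theory Submission
  imports Defs "Jordan_Normal_Form.Spectral_Radius" "HOL-Analysis.Convex" "HOL-Real_Asymp.Real_Asymp"
begin

text \<open>
  Write \<open>A = P + \<surd>2 Q\<close> with integer \<open>P\<close>, \<open>Q\<close>, and \<open>A\<^sup>\<sigma> = P - \<surd>2 Q\<close>. A symmetric matrix with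
  spectrum in \<open>[-2, 2]\<close> satisfies \<open>\<bar>x\<^sup>T M x\<bar> \<le> 2\<parallel>x\<parallel>\<^sup>2\<close>; lacking the spectral theorem, this follows
  from the polynomial growth of the powers of a matrix of spectral radius \<open>\<le> 1\<close>. Testing \<open>A\<close> and
  \<open>A\<^sup>\<sigma>\<close> on \<open>e\<^sub>i \<plusminus> e\<^sub>j\<close> shows that every edge weight is a non-zero integer or \<open>\<plusminus>\<surd>2\<close>. Adding the
  bounds for \<open>A\<close> and \<open>A\<^sup>\<sigma>\<close> bounds the quadratic form of the double cover \<open>[[P, \<surd>2 Q], [\<surd>2 Q, P]]\<close>
  as well. An induced cycle with an odd number of \<open>\<surd>2\<close>-edges lifts to a single cycle of length
  \<open>2k\<close> in the double cover, and a suitable \<open>\<plusminus>1\<close> vector on it violates that bound. Splitting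
  closed walks at repeated vertices and chords extends the parity statement from induced cycles to
  all closed walks, in particular to all cycles. Hence the connected graph admits a sign switching
  \<open>D\<close> with \<open>D A\<^sup>\<sigma> D = A\<close>, so \<open>A\<close> and \<open>A\<^sup>\<sigma>\<close> have the same characteristic polynomial, whose
  coefficients lie in \<open>\<int>[\<surd>2]\<close> and are fixed by conjugation, i.e. are integers.
\<close>

section \<open>Arithmetic in \<open>\<int>[\<surd>2]\<close>\<close>

lemma double_square_eq_square_int:
  fixes a b :: int
  assumes "a\<^sup>2 = 2 * b\<^sup>2"
  shows "b = 0"
  using assms
proof (induction "nat \<bar>b\<bar>" arbitrary: a b rule: less_induct)
  case less
  show ?case
  proof (rule ccontr)
    assume "b \<noteq> 0"
    from less.prems have "even (a\<^sup>2)" by simp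
    then have "even a" by simp
    then obtain c where a: "a = 2 * c" by blast
    with less.prems have b2: "b\<^sup>2 = 2 * c\<^sup>2" by (simp add: power2_eq_square)
    then have "even (b\<^sup>2)" by simp
    then have "even b" by simp
    then obtain d where b: "b = 2 * d" by blast
    with b2 have "c\<^sup>2 = 2 * d\<^sup>2" by (simp add: power2_eq_square)
    moreover have "nat \<bar>d\<bar> < nat \<bar>b\<bar>" using b \<open>b \<noteq> 0\<close> by auto
    ultimately have "d = 0" using less.hyps by blast
    with b \<open>b \<noteq> 0\<close> show False by simp
  qed
qed

lemma of_int_add_sqrt2_eq_0_iff:
  "real_of_int a + sqrt 2 * real_of_int b = 0 \<longleftrightarrow> a = 0 \<and> b = 0"
proof
  assume eq: "real_of_int a + sqrt 2 * real_of_int b = 0"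
  then have "real_of_int a = - (sqrt 2 * real_of_int b)" by linarith
  then have "real_of_int (a\<^sup>2) = real_of_int (2 * b\<^sup>2)"
    by (simp add: power_mult_distrib)
  then have "b = 0" by (intro double_square_eq_square_int) (simp only: of_int_eq_iff)
  with eq show "a = 0 \<and> b = 0" by simp
qed simp

lemma of_int_add_sqrt2_eq_iff:
  "real_of_int a + sqrt 2 * real_of_int b = real_of_int a' + sqrt 2 * real_of_int b'
     \<longleftrightarrow> a = a' \<and> b = b'"
proof -
  have "real_of_int a + sqrt 2 * real_of_int b = real_of_int a' + sqrt 2 * real_of_int b'
      \<longleftrightarrow> real_of_int (a - a') + sqrt 2 * real_of_int (b - b') = 0"
    by (simp add: right_diff_distrib algebra_simps)
  also have "\<dots> \<longleftrightarrow> a - a' = 0 \<and> b - b' = 0" by (rule of_int_add_sqrt2_eq_0_iff)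
  finally show ?thesis by simp
qed

lemma abs_of_int_neq_sqrt2: "\<bar>real_of_int a\<bar> \<noteq> sqrt 2"
proof
  assume "\<bar>real_of_int a\<bar> = sqrt 2"
  then have "\<bar>real_of_int a\<bar>\<^sup>2 = 2" by simp
  then have "real_of_int (a\<^sup>2) = real_of_int (2 * 1\<^sup>2)" by simp
  then have "a\<^sup>2 = 2 * 1\<^sup>2" by (simp only: of_int_eq_iff)
  then have "(1::int) = 0" by (rule double_square_eq_square_int)
  then show False by simp
qed

lemma zsqrt2_conjugates_abs_le_2:
  fixes a b :: int
  assumes "\<bar>real_of_int a + sqrt 2 * real_of_int b\<bar> \<le> 2"
    and "\<bar>real_of_int a - sqrt 2 * real_of_int b\<bar> \<le> 2"
  shows "b = 0 \<or> (a = 0 \<and> \<bar>b\<bar> = 1)"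
proof -
  have sqrt2: "1.4 < sqrt (2::real)" by (rule real_less_rsqrt) (simp add: power2_eq_square)
  have "\<bar>real_of_int a\<bar> + \<bar>sqrt 2 * real_of_int b\<bar> \<le> 2"
    using assms by linarith
  moreover have "1.4 * \<bar>real_of_int b\<bar> \<le> sqrt 2 * \<bar>real_of_int b\<bar>"
    using sqrt2 by (intro mult_right_mono) auto
  moreover have "sqrt 2 * \<bar>real_of_int b\<bar> = \<bar>sqrt 2 * real_of_int b\<bar>"
    by (simp add: abs_mult)
  ultimately show ?thesis by linarith
qed

lemma poly_of_int_at_sqrt2:
  fixes c :: "int poly"
  obtains a b :: int
  where "poly (map_poly real_of_int c) (sqrt 2) = real_of_int a + sqrt 2 * real_of_int b"
    and "poly (map_poly real_of_int c) (- sqrt 2) = real_of_int a - sqrt 2 * real_of_int b"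
proof (induction c arbitrary: thesis)
  case 0
  show ?case by (rule 0[of 0 0]) simp_all
next
  case (pCons x c)
  obtain a b where ab: "poly (map_poly real_of_int c) (sqrt 2) = real_of_int a + sqrt 2 * real_of_int b"
    "poly (map_poly real_of_int c) (- sqrt 2) = real_of_int a - sqrt 2 * real_of_int b"
    using pCons.IH by blast
  have "poly (map_poly real_of_int (pCons x c)) r = real_of_int x + r * poly (map_poly real_of_int c) r"
    for r by (simp add: of_int_hom.map_poly_pCons_hom)
  moreover have "sqrt 2 * (real_of_int a + sqrt 2 * real_of_int b) = 2 * real_of_int b + sqrt 2 * real_of_int a"
    and "- sqrt 2 * (real_of_int a - sqrt 2 * real_of_int b) = 2 * real_of_int b - sqrt 2 * real_of_int a"
    by (simp_all add: ring_distribs mult.assoc[symmetric])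
  ultimately show ?case
    by (intro pCons.prems[of "x + 2 * b" a]) (simp_all only: ab of_int_add of_int_mult of_int_numeral add.assoc)
qed

section \<open>Quadratic forms of matrices with spectrum in \<open>[-2, 2]\<close>\<close>

definition bilinear_form :: "nat \<Rightarrow> (nat \<Rightarrow> nat \<Rightarrow> real) \<Rightarrow> (nat \<Rightarrow> real) \<Rightarrow> (nat \<Rightarrow> real) \<Rightarrow> real"
  where "bilinear_form n W y z = (\<Sum>i<n. \<Sum>j<n. y i * W i j * z j)"

abbreviation quadratic_form :: "real mat \<Rightarrow> (nat \<Rightarrow> real) \<Rightarrow> real"
  where "quadratic_form M x \<equiv> bilinear_form (dim_row M) (\<lambda>i j. M $$ (i, j)) x x"

lemma abs_bilinear_form_le:
  assumes "\<And>i j. i < n \<Longrightarrow> j < n \<Longrightarrow> \<bar>W i j\<bar> \<le> c"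
  shows "\<bar>bilinear_form n W y y\<bar> \<le> c * (\<Sum>i<n. \<bar>y i\<bar>)\<^sup>2"
proof -
  have "\<bar>bilinear_form n W y y\<bar> \<le> (\<Sum>i<n. \<Sum>j<n. \<bar>y i\<bar> * c * \<bar>y j\<bar>)"
    unfolding bilinear_form_def
  proof (intro order.trans[OF sum_abs] sum_mono order.trans[OF sum_abs])
    fix i j assume "i \<in> {..<n}" "j \<in> {..<n}"
    then show "\<bar>y i * W i j * y j\<bar> \<le> \<bar>y i\<bar> * c * \<bar>y j\<bar>"
      using assms by (simp add: abs_mult mult_mono mult_right_mono)
  qed
  also have "\<dots> = c * (\<Sum>i<n. \<bar>y i\<bar>)\<^sup>2"
    by (simp add: power2_eq_square sum_product sum_distrib_left algebra_simps)
  finally show ?thesis .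
qed

lemma bilinear_form_smult_mat:
  assumes "M \<in> carrier_mat n n"
  shows "bilinear_form n (\<lambda>i j. (c \<cdot>\<^sub>m M) $$ (i, j)) x x = c * bilinear_form n (\<lambda>i j. M $$ (i, j)) x x"
  using assms by (simp add: bilinear_form_def sum_distrib_left algebra_simps)

lemma bilinear_form_parallelogram:
  "bilinear_form n W (\<lambda>i. y i + z i) (\<lambda>i. y i + z i) + bilinear_form n W (\<lambda>i. y i - z i) (\<lambda>i. y i - z i)
    = 2 * bilinear_form n W y y + 2 * bilinear_form n W z z"
  unfolding bilinear_form_def by (simp add: algebra_simps sum.distrib sum_subtractf)

lemma bilinear_form_polarization:
  "bilinear_form n W (\<lambda>i. y i + z i) (\<lambda>i. y i + z i) - bilinear_form n W (\<lambda>i. y i - z i) (\<lambda>i. y i - z i)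
    = 2 * bilinear_form n W y z + 2 * bilinear_form n W z y"
  unfolding bilinear_form_def by (simp add: algebra_simps sum.distrib sum_subtractf)

lemma bilinear_form_commute:
  assumes "\<And>i j. i < n \<Longrightarrow> j < n \<Longrightarrow> W i j = W j i"
  shows "bilinear_form n W z y = bilinear_form n W y z"
  unfolding bilinear_form_def using assms
  by (subst sum.swap) (auto simp: mult_ac intro!: sum.cong)

lemma pow_mat_add:
  fixes M :: "'a::semiring_1 mat"
  assumes M: "M \<in> carrier_mat n n"
  shows "M ^\<^sub>m (a + b) = M ^\<^sub>m a * M ^\<^sub>m b"
proof (induction b)
  case 0
  show ?case using M by simp
next
  case (Suc b)
  have "M ^\<^sub>m (a + Suc b) = M ^\<^sub>m a * M ^\<^sub>m b * M" by (simp add: Suc.IH)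
  also have "\<dots> = M ^\<^sub>m a * (M ^\<^sub>m b * M)" using M by (intro assoc_mult_mat) auto
  finally show ?case by simp
qed

lemma transpose_pow_mat:
  fixes M :: "'a::comm_semiring_1 mat"
  assumes M: "M \<in> carrier_mat n n" and sym: "transpose_mat M = M"
  shows "transpose_mat (M ^\<^sub>m k) = M ^\<^sub>m k"
proof (induction k)
  case 0
  show ?case using M by simp
next
  case (Suc k)
  have "transpose_mat (M ^\<^sub>m Suc k) = transpose_mat M * transpose_mat (M ^\<^sub>m k)"
    using M by (simp add: transpose_mult[of _ n n _ n])
  also have "\<dots> = M ^\<^sub>m 1 * M ^\<^sub>m k" using M sym Suc.IH by simp
  also have "\<dots> = M ^\<^sub>m Suc k" using pow_mat_add[OF M, of 1 k] by simp
  finally show ?case .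
qed

lemma quadratic_form_pow_mat_double:
  fixes M :: "real mat"
  assumes M: "M \<in> carrier_mat n n" and sym: "transpose_mat M = M"
  shows "quadratic_form (M ^\<^sub>m (k + k)) x = (\<Sum>l<n. (\<Sum>j<n. (M ^\<^sub>m k) $$ (l, j) * x j)\<^sup>2)"
proof -
  let ?P = "M ^\<^sub>m k"
  have P: "?P \<in> carrier_mat n n" using M by simp
  have P_sym: "?P $$ (i, l) = ?P $$ (l, i)" if "i < n" "l < n" for i l
  proof -
    have "?P $$ (i, l) = transpose_mat ?P $$ (l, i)" using that carrier_matD[OF P] by simp
    then show ?thesis by (simp add: transpose_pow_mat[OF M sym])
  qed
  have "(M ^\<^sub>m (k + k)) $$ (i, j) = (\<Sum>l<n. ?P $$ (l, i) * ?P $$ (l, j))" if "i < n" "j < n" for i j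
  proof -
    have "(M ^\<^sub>m (k + k)) $$ (i, j) = (\<Sum>l<n. ?P $$ (i, l) * ?P $$ (l, j))"
      using that carrier_matD[OF P] by (simp add: pow_mat_add[OF M] scalar_prod_def lessThan_atLeast0)
    also have "\<dots> = (\<Sum>l<n. ?P $$ (l, i) * ?P $$ (l, j))"
      using that P_sym by (intro sum.cong) auto
    finally show ?thesis .
  qed
  then have "quadratic_form (M ^\<^sub>m (k + k)) x
      = (\<Sum>i<n. \<Sum>j<n. \<Sum>l<n. (?P $$ (l, i) * x i) * (?P $$ (l, j) * x j))"
    using carrier_matD[OF M] unfolding bilinear_form_def
    by (auto simp: sum_distrib_left sum_distrib_right mult_ac intro!: sum.cong)
  also have "\<dots> = (\<Sum>l<n. \<Sum>i<n. \<Sum>j<n. (?P $$ (l, i) * x i) * (?P $$ (l, j) * x j))"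
    by (subst sum.swap, rule sum.cong[OF refl], rule sum.swap)
  also have "\<dots> = (\<Sum>l<n. (\<Sum>j<n. ?P $$ (l, j) * x j)\<^sup>2)"
    by (simp add: power2_eq_square sum_product)
  finally show ?thesis .
qed

text \<open>Cauchy-Schwarz: \<open>(x\<^sup>T M\<^sup>k x)\<^sup>2 \<le> \<parallel>x\<parallel>\<^sup>2 \<parallel>M\<^sup>k x\<parallel>\<^sup>2 = \<parallel>x\<parallel>\<^sup>2 x\<^sup>T M\<^sup>2\<^sup>k x\<close>.\<close>
lemma quadratic_form_pow_mat_growth:
  fixes M :: "real mat"
  assumes M: "M \<in> carrier_mat n n" and sym: "transpose_mat M = M"
    and X: "(\<Sum>i<n. (x i)\<^sup>2) = X" "X > 0" and a: "a \<ge> 0" "quadratic_form M x = a * X"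
  shows "a ^ 2 ^ j * X \<le> quadratic_form (M ^\<^sub>m 2 ^ j) x"
proof (induction j)
  case 0
  show ?case using M a by simp
next
  case (Suc j)
  let ?P = "M ^\<^sub>m 2 ^ j"
  let ?y = "\<lambda>l. \<Sum>j<n. ?P $$ (l, j) * x j"
  have "quadratic_form ?P x = (\<Sum>l<n. x l * ?y l)"
    using M by (simp add: bilinear_form_def sum_distrib_left mult_ac)
  have "(a ^ 2 ^ j * X)\<^sup>2 \<le> (quadratic_form ?P x)\<^sup>2"
    using Suc.IH a X by (intro power_mono) auto
  also have "\<dots> \<le> X * (\<Sum>l<n. (?y l)\<^sup>2)"
    using Cauchy_Schwarz_ineq_sum[of x ?y "{..<n}"] X \<open>quadratic_form ?P x = _\<close> by simp
  also have "\<dots> = X * quadratic_form (M ^\<^sub>m 2 ^ Suc j) x"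
    using quadratic_form_pow_mat_double[OF M sym, of "2 ^ j" x] by (simp add: mult_2)
  finally show ?case
    using X by (simp add: power2_eq_square power_mult power_mult_distrib mult_ac)
qed

lemma pow_mat_entries_polynomially_bounded:
  fixes M :: "real mat"
  assumes M: "M \<in> carrier_mat n n"
    and ev: "\<And>\<mu>. eigenvalue (map_mat complex_of_real M) \<mu> \<Longrightarrow> cmod \<mu> \<le> 1"
  obtains c1 c2 where "\<And>k i j. i < n \<Longrightarrow> j < n \<Longrightarrow> \<bar>(M ^\<^sub>m k) $$ (i, j)\<bar> \<le> c1 + c2 * real k ^ (n - 1)"
proof (cases "n = 0")
  case True
  then show ?thesis using that by simp
next
  case False
  let ?C = "map_mat complex_of_real M"
  have C: "?C \<in> carrier_mat n n" using M by simp
  obtain \<mu> where "eigenvalue ?C \<mu>" "spectral_radius ?C = cmod \<mu>"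
    using spectral_radius_mem_max(1)[OF C] False unfolding spectrum_def by auto
  then have "spectral_radius ?C \<le> 1" using ev by simp
  from spectral_radius_jnf_norm_bound_le_1_upper_triangular[OF C this]
  obtain c1 c2 where bound: "\<And>k. norm_bound (?C ^\<^sub>m k) (c1 + c2 * of_nat k ^ (n - 1))" by blast
  have "?C ^\<^sub>m k = map_mat complex_of_real (M ^\<^sub>m k)" for k
    by (rule of_real_hom.mat_hom_pow[OF M, symmetric])
  then show ?thesis
    using bound M by (intro that[of c1 c2]) (auto simp: norm_bound_def)
qed

lemma eventually_poly_less_exp:
  fixes r C1 C2 :: real
  assumes r: "r > 1"
  shows "eventually (\<lambda>m. C1 + C2 * real m ^ d < r ^ m) sequentially"
proof -
  have "((\<lambda>m. (C1 + C2 * real m ^ d) / r ^ m) \<longlongrightarrow> 0) sequentially"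
    using r by real_asymp
  then have "eventually (\<lambda>m. (C1 + C2 * real m ^ d) / r ^ m < 1) sequentially"
    by (rule order_tendstoD) simp
  then show ?thesis by eventually_elim (use r in \<open>simp add: field_simps\<close>)
qed

text \<open>Otherwise \<open>x\<^sup>T M\<^sup>2\<^sup>j x\<close> grows like \<open>a\<^sup>2\<^sup>j\<close> with \<open>a > 1\<close>, while the entries of \<open>M\<^sup>k\<close> grow only
  polynomially in \<open>k\<close>.\<close>
lemma quadratic_form_le_if_eigenvalues_in_unit_disc:
  fixes M :: "real mat"
  assumes M: "M \<in> carrier_mat n n" and sym: "transpose_mat M = M"
    and ev: "\<And>\<mu>. eigenvalue (map_mat complex_of_real M) \<mu> \<Longrightarrow> cmod \<mu> \<le> 1"
  shows "quadratic_form M x \<le> (\<Sum>i<n. (x i)\<^sup>2)"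
proof (rule ccontr)
  define X where "X = (\<Sum>i<n. (x i)\<^sup>2)"
  define a where "a = quadratic_form M x / X"
  assume "\<not> quadratic_form M x \<le> (\<Sum>i<n. (x i)\<^sup>2)"
  then have gt: "quadratic_form M x > X" by (simp add: X_def)
  have "X \<noteq> 0"
  proof
    assume "X = 0"
    then have "\<forall>i\<in>{..<n}. x i = 0" unfolding X_def by (simp add: sum_nonneg_eq_0_iff)
    then have "quadratic_form M x = 0" using M by (simp add: bilinear_form_def)
    with gt \<open>X = 0\<close> show False by simp
  qed
  moreover have "X \<ge> 0" unfolding X_def by (simp add: sum_nonneg)
  ultimately have X: "X > 0" by simp
  then have a: "a > 1" "quadratic_form M x = a * X" using gt by (simp_all add: a_def)
  obtain c1 c2 where entries: "\<And>k i j. i < n \<Longrightarrow> j < n \<Longrightarrow> \<bar>(M ^\<^sub>m k) $$ (i, j)\<bar> \<le> c1 + c2 * real k ^ (n - 1)"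
    using pow_mat_entries_polynomially_bounded[OF M ev] by blast
  define K where "K = (\<Sum>i<n. \<bar>x i\<bar>)\<^sup>2"
  have "a ^ 2 ^ j \<le> c1 * K / X + c2 * K / X * real (2 ^ j) ^ (n - 1)" for j
  proof -
    have "a ^ 2 ^ j * X \<le> quadratic_form (M ^\<^sub>m 2 ^ j) x"
      using quadratic_form_pow_mat_growth[OF M sym X_def[symmetric] X] a by simp
    also have "\<dots> \<le> (c1 + c2 * real (2 ^ j) ^ (n - 1)) * K"
      using abs_bilinear_form_le[of n _ "c1 + c2 * real (2 ^ j) ^ (n - 1)" x] entries M
      unfolding K_def by fastforce
    finally show ?thesis using X by (simp add: field_simps)
  qed
  moreover obtain N where N: "\<And>m. m \<ge> N \<Longrightarrow> c1 * K / X + c2 * K / X * real m ^ (n - 1) < a ^ m"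
    using eventually_poly_less_exp[OF a(1)] unfolding eventually_sequentially by blast
  have "c1 * K / X + c2 * K / X * real (2 ^ N) ^ (n - 1) < a ^ 2 ^ N"
    by (rule N) (simp add: less_imp_le)
  ultimately show False by (metis not_le)
qed

lemma eigenvalue_smult_mat:
  fixes A :: "'a::field mat"
  assumes A: "A \<in> carrier_mat n n" and c: "c \<noteq> 0" and ev: "eigenvalue (c \<cdot>\<^sub>m A) \<mu>"
  shows "eigenvalue A (\<mu> / c)"
proof -
  from ev obtain v where v: "v \<in> carrier_vec n" "v \<noteq> 0\<^sub>v n" and cAv: "(c \<cdot>\<^sub>m A) *\<^sub>v v = \<mu> \<cdot>\<^sub>v v"
    using A unfolding eigenvalue_def eigenvector_def by auto
  have "(c \<cdot>\<^sub>m A) *\<^sub>v v = c \<cdot>\<^sub>v (A *\<^sub>v v)"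
    using A v by (intro eq_vecI) (auto simp: scalar_prod_def sum_distrib_left mult.assoc)
  with cAv have eq: "c \<cdot>\<^sub>v (A *\<^sub>v v) = \<mu> \<cdot>\<^sub>v v" by simp
  have "A *\<^sub>v v = (\<mu> / c) \<cdot>\<^sub>v v"
  proof (rule eq_vecI)
    fix i assume "i < dim_vec ((\<mu> / c) \<cdot>\<^sub>v v)"
    moreover from eq have "(c \<cdot>\<^sub>v (A *\<^sub>v v)) $ i = (\<mu> \<cdot>\<^sub>v v) $ i" by simp
    ultimately show "(A *\<^sub>v v) $ i = ((\<mu> / c) \<cdot>\<^sub>v v) $ i"
      using A v c by (simp add: field_simps)
  qed (use A v in auto)
  with A v show ?thesis unfolding eigenvalue_def eigenvector_def by auto
qed

lemma abs_quadratic_form_le: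
  fixes M :: "real mat"
  assumes M: "M \<in> carrier_mat n n" and sym: "transpose_mat M = M" and ev: "eigs_in_interval M"
  shows "\<bar>quadratic_form M x\<bar> \<le> 2 * (\<Sum>i<n. (x i)\<^sup>2)"
proof -
  have "c * quadratic_form M x \<le> (\<Sum>i<n. (x i)\<^sup>2)" if c: "\<bar>c\<bar> = 1 / 2" for c :: real
  proof -
    have "map_mat complex_of_real (c \<cdot>\<^sub>m M) = complex_of_real c \<cdot>\<^sub>m map_mat complex_of_real M"
      by (rule eq_matI) auto
    moreover have "cmod \<mu> \<le> 1" if "eigenvalue (complex_of_real c \<cdot>\<^sub>m map_mat complex_of_real M) \<mu>" for \<mu>
    proof -
      have "eigenvalue (map_mat complex_of_real M) (\<mu> / complex_of_real c)"
        using eigenvalue_smult_mat[OF _ _ that] M c by auto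
      then have real: "\<mu> / complex_of_real c \<in> \<real>" and "\<bar>Re (\<mu> / complex_of_real c)\<bar> \<le> 2"
        using ev unfolding eigs_in_interval_def by auto
      define r where "r = Re (\<mu> / complex_of_real c)"
      have "\<mu> = complex_of_real (c * r)"
        using of_real_Re[OF real] c unfolding r_def by (auto simp: field_simps)
      then have "cmod \<mu> = \<bar>c\<bar> * \<bar>r\<bar>" by (simp only: norm_of_real abs_mult)
      also have "\<dots> \<le> \<bar>c\<bar> * 2" using \<open>\<bar>Re _\<bar> \<le> 2\<close> unfolding r_def by (intro mult_left_mono) auto
      finally show ?thesis using c by simp
    qed
    moreover have "transpose_mat (c \<cdot>\<^sub>m M) = c \<cdot>\<^sub>m M"
    proof (rule eq_matI)
      fix i j assume "i < dim_row (c \<cdot>\<^sub>m M)" "j < dim_col (c \<cdot>\<^sub>m M)"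
      moreover have "transpose_mat M $$ (i, j) = M $$ (i, j)" by (simp add: sym)
      ultimately show "transpose_mat (c \<cdot>\<^sub>m M) $$ (i, j) = (c \<cdot>\<^sub>m M) $$ (i, j)"
        using M by auto
    qed (use M in auto)
    ultimately have "quadratic_form (c \<cdot>\<^sub>m M) x \<le> (\<Sum>i<n. (x i)\<^sup>2)"
      using quadratic_form_le_if_eigenvalues_in_unit_disc[of "c \<cdot>\<^sub>m M" n] M by auto
    then show ?thesis using bilinear_form_smult_mat[OF M] M by simp
  qed
  from this[of "1 / 2"] this[of "- 1 / 2"] show ?thesis by (simp add: abs_le_iff)
qed

section \<open>Parity of closed walks\<close>

definition closed_walk :: "('a \<Rightarrow> 'a \<Rightarrow> bool) \<Rightarrow> nat \<Rightarrow> (nat \<Rightarrow> 'a) \<Rightarrow> bool"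
  where "closed_walk R k g \<longleftrightarrow> k \<ge> 1 \<and> (\<forall>t<k. R (g t) (g ((t + 1) mod k)))"

definition closed_walk_weight :: "('a \<Rightarrow> 'a \<Rightarrow> nat) \<Rightarrow> nat \<Rightarrow> (nat \<Rightarrow> 'a) \<Rightarrow> nat"
  where "closed_walk_weight f k g = (\<Sum>t<k. f (g t) (g ((t + 1) mod k)))"

definition induced_cycle :: "('a \<Rightarrow> 'a \<Rightarrow> bool) \<Rightarrow> nat \<Rightarrow> (nat \<Rightarrow> 'a) \<Rightarrow> bool"
  where "induced_cycle R k g \<longleftrightarrow> k \<ge> 3 \<and> inj_on g {..<k} \<and> closed_walk R k g \<and>
     (\<forall>t<k. \<forall>t'<k. R (g t) (g t') \<longrightarrow> t' = (t + 1) mod k \<or> t = (t' + 1) mod k)"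

lemma closed_walk_edge:
  assumes "closed_walk R k g"
  shows "R (g (s mod k)) (g ((s + 1) mod k))"
proof -
  have "s mod k < k" using assms by (simp add: closed_walk_def)
  then have "R (g (s mod k)) (g ((s mod k + 1) mod k))" using assms unfolding closed_walk_def by blast
  then show ?thesis by (simp add: mod_Suc_eq)
qed

lemma sum_lessThan_add:
  fixes G :: "nat \<Rightarrow> 'a::comm_monoid_add"
  shows "(\<Sum>t<m + n. G t) = (\<Sum>t<m. G t) + (\<Sum>t<n. G (m + t))"
  by (induction n) (simp_all add: add.assoc)

lemma sum_lessThan_rotate:
  fixes G :: "nat \<Rightarrow> 'a::comm_monoid_add"
  assumes "k > 0"
  shows "(\<Sum>t<k. G ((a + t) mod k)) = (\<Sum>t<k. G t)"
proof (induction a)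
  case 0
  show ?case by simp
next
  case (Suc a)
  obtain m where k: "k = Suc m" using assms by (cases k) auto
  have "(\<Sum>t<k. G ((Suc a + t) mod k)) = (\<Sum>t<m. G ((a + Suc t) mod k)) + G ((a + k) mod k)"
    unfolding k by (simp add: sum.lessThan_Suc)
  also have "\<dots> = G ((a + 0) mod k) + (\<Sum>t<m. G ((a + Suc t) mod k))"
    by (simp add: add.commute)
  also have "\<dots> = (\<Sum>t<k. G ((a + t) mod k))"
    unfolding k by (rule sum.lessThan_Suc_shift[symmetric])
  finally show ?case using Suc.IH by simp
qed

lemma card_lessThan_filter_Suc:
  "card {r. r < Suc t \<and> P r} = card {r. r < t \<and> P r} + (if P t then 1 else 0)"
proof -
  have "{r. r < Suc t \<and> P r} = {r. r < t \<and> P r} \<union> (if P t then {t} else {})"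
    by (auto simp: less_Suc_eq)
  then show ?thesis by auto
qed

lemma card_lessThan_filter_eq_sum: "card {t. t < k \<and> P t} = (\<Sum>t<k::nat. if P t then 1 else 0)"
  by (induction k) (simp_all add: card_lessThan_filter_Suc)

lemma closed_walk_arc:
  assumes walk: "closed_walk R k g" and a: "a < k" and close: "R (g ((a + m) mod k)) (g a)"
  shows "closed_walk R (Suc m) (\<lambda>t. g ((a + t) mod k))"
    and "closed_walk_weight f (Suc m) (\<lambda>t. g ((a + t) mod k))
       = (\<Sum>t<m. f (g ((a + t) mod k)) (g ((a + t + 1) mod k))) + f (g ((a + m) mod k)) (g a)"
proof -
  note edge = closed_walk_edge[OF walk, of "a + t" for t]
  have next_index: "(a + (t + 1) mod Suc m) mod k = (if t = m then a else (a + t + 1) mod k)" if "t \<le> m" for t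
    using that a by auto
  show "closed_walk R (Suc m) (\<lambda>t. g ((a + t) mod k))"
    unfolding closed_walk_def using edge close next_index by auto
  have "closed_walk_weight f (Suc m) (\<lambda>t. g ((a + t) mod k))
      = (\<Sum>t<Suc m. f (g ((a + t) mod k)) (g ((a + (t + 1) mod Suc m) mod k)))"
    unfolding closed_walk_weight_def ..
  also have "\<dots> = (\<Sum>t<m. f (g ((a + t) mod k)) (g ((a + t + 1) mod k))) + f (g ((a + m) mod k)) (g a)"
    using next_index by (simp add: sum.lessThan_Suc)
  finally show "closed_walk_weight f (Suc m) (\<lambda>t. g ((a + t) mod k)) = \<dots>" .
qed

lemma closed_walk_weight_rotate_split:
  assumes "k \<ge> 1" "d \<le> k"
  shows "(\<Sum>t<d. f (g ((a + t) mod k)) (g ((a + t + 1) mod k)))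
      + (\<Sum>t<k - d. f (g ((a + d + t) mod k)) (g ((a + d + t + 1) mod k)))
    = closed_walk_weight f k g"
proof -
  define G where "G s = f (g s) (g ((s + 1) mod k))" for s
  have G: "G ((b + t) mod k) = f (g ((b + t) mod k)) (g ((b + t + 1) mod k))" for b t
    unfolding G_def by (simp add: mod_Suc_eq)
  have "(\<Sum>t<d. G ((a + t) mod k)) + (\<Sum>t<k - d. G ((a + (d + t)) mod k))
      = (\<Sum>t<k. G ((a + t) mod k))"
    using sum_lessThan_add[of "\<lambda>t. G ((a + t) mod k)" d "k - d"] assms by simp
  also have "\<dots> = (\<Sum>t<k. G t)"
    using assms by (simp add: sum_lessThan_rotate)
  finally show ?thesis
    unfolding closed_walk_weight_def G_def[symmetric] G by (simp add: add.assoc)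
qed

lemma closed_walk_split_at_repeated_vertex:
  assumes walk: "closed_walk R k g" and ij: "i < j" "j < k" and repeated: "g i = g j"
  obtains k1 g1 k2 g2 where "closed_walk R k1 g1" "closed_walk R k2 g2" "k1 < k" "k2 < k"
    "closed_walk_weight f k1 g1 + closed_walk_weight f k2 g2 = closed_walk_weight f k g"
proof -
  let ?w = "\<lambda>s. f (g (s mod k)) (g ((s + 1) mod k))"
  note edge = closed_walk_edge[OF walk]
  obtain m1 where m1: "j = i + Suc m1" using less_imp_Suc_add[OF ij(1)] by auto
  have close1: "R (g ((i + m1) mod k)) (g i)"
    using edge[of "i + m1"] m1 ij repeated by simp
  define m2 where "m2 = k - (j - i) - 1"
  have m2: "k - (j - i) = Suc m2" using ij unfolding m2_def by simp
  have "j + m2 + 1 = k + i" using ij m2 by linarith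
  then have j_m2: "(j + m2 + 1) mod k = i" using ij by simp
  have close2: "R (g ((j + m2) mod k)) (g j)"
    using edge[of "j + m2"] j_m2 repeated by simp
  have w1: "closed_walk_weight f (Suc m1) (\<lambda>t. g ((i + t) mod k)) = (\<Sum>t<j - i. ?w (i + t))"
    using closed_walk_arc(2)[OF walk _ close1, of f] ij m1 repeated
    by (simp add: mod_Suc_eq)
  have w2: "closed_walk_weight f (Suc m2) (\<lambda>t. g ((j + t) mod k)) = (\<Sum>t<k - (j - i). ?w (j + t))"
    using closed_walk_arc(2)[OF walk _ close2, of f] ij j_m2 repeated
    unfolding m2 by (simp add: mod_Suc_eq)
  show ?thesis
  proof (rule that)
    show "closed_walk R (Suc m1) (\<lambda>t. g ((i + t) mod k))" "closed_walk R (Suc m2) (\<lambda>t. g ((j + t) mod k))"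
      using closed_walk_arc(1)[OF walk _ close1] closed_walk_arc(1)[OF walk _ close2] ij by auto
    show "Suc m1 < k" "Suc m2 < k" using ij m1 m2 by auto
    show "closed_walk_weight f (Suc m1) (\<lambda>t. g ((i + t) mod k))
        + closed_walk_weight f (Suc m2) (\<lambda>t. g ((j + t) mod k)) = closed_walk_weight f k g"
      using closed_walk_weight_rotate_split[of k "j - i" f g i] ij unfolding w1 w2 by (simp add: mod_Suc_eq)
  qed
qed

lemma closed_walk_split_at_chord:
  assumes walk: "closed_walk R k g" and ij: "i < j" "j < k"
    and chord: "R (g i) (g j)" "R (g j) (g i)" "j \<noteq> i + 1" "\<not> (i = 0 \<and> j = k - 1)"
  obtains k1 g1 k2 g2 where "closed_walk R k1 g1" "closed_walk R k2 g2" "k1 < k" "k2 < k"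
    "closed_walk_weight f k1 g1 + closed_walk_weight f k2 g2
       = closed_walk_weight f k g + f (g j) (g i) + f (g i) (g j)"
proof -
  let ?w = "\<lambda>s. f (g (s mod k)) (g ((s + 1) mod k))"
  define m2 where "m2 = k - (j - i)"
  have j_m2: "(j + m2) mod k = i" using ij unfolding m2_def by (simp add: add.commute)
  have close1: "R (g ((i + (j - i)) mod k)) (g i)" using chord ij by simp
  have close2: "R (g ((j + m2) mod k)) (g j)" using chord j_m2 by simp
  have w1: "closed_walk_weight f (Suc (j - i)) (\<lambda>t. g ((i + t) mod k)) = (\<Sum>t<j - i. ?w (i + t)) + f (g j) (g i)"
    using closed_walk_arc(2)[OF walk _ close1, of f] ij by (simp add: mod_Suc_eq)
  have w2: "closed_walk_weight f (Suc m2) (\<lambda>t. g ((j + t) mod k)) = (\<Sum>t<k - (j - i). ?w (j + t)) + f (g i) (g j)"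
    using closed_walk_arc(2)[OF walk _ close2, of f] ij j_m2 by (simp add: m2_def mod_Suc_eq)
  show ?thesis
  proof (rule that)
    show "closed_walk R (Suc (j - i)) (\<lambda>t. g ((i + t) mod k))" "closed_walk R (Suc m2) (\<lambda>t. g ((j + t) mod k))"
      using closed_walk_arc(1)[OF walk _ close1] closed_walk_arc(1)[OF walk _ close2] ij by auto
    show "Suc (j - i) < k" "Suc m2 < k" using ij chord unfolding m2_def by auto
    show "closed_walk_weight f (Suc (j - i)) (\<lambda>t. g ((i + t) mod k))
        + closed_walk_weight f (Suc m2) (\<lambda>t. g ((j + t) mod k))
        = closed_walk_weight f k g + f (g j) (g i) + f (g i) (g j)"
      using closed_walk_weight_rotate_split[of k "j - i" f g i] ij unfolding w1 w2 by (simp add: mod_Suc_eq)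
  qed
qed

lemma closed_walk_cases:
  assumes sym: "\<And>x y. R x y \<Longrightarrow> R y x" and irrefl: "\<And>x. \<not> R x x" and walk: "closed_walk R k g"
  obtains (repeated) i j where "i < j" "j < k" "g i = g j"
    | (short) "inj_on g {..<k}" "k < 3"
    | (induced) "induced_cycle R k g"
    | (chord) i j where "i < j" "j < k" "R (g i) (g j)" "j \<noteq> i + 1" "\<not> (i = 0 \<and> j = k - 1)"
proof (cases "inj_on g {..<k} \<and> k \<ge> 3")
  case True
  show ?thesis
  proof (cases "induced_cycle R k g")
    case False
    then obtain t t' where tt: "t < k" "t' < k" "R (g t) (g t')"
      "t' \<noteq> (t + 1) mod k" "t \<noteq> (t' + 1) mod k"
      using True walk unfolding induced_cycle_def by blast
    moreover have "t \<noteq> t'" using tt irrefl by auto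
    ultimately obtain i j where ij: "i < j" "j < k" "R (g i) (g j)"
      "j \<noteq> (i + 1) mod k" "i \<noteq> (j + 1) mod k"
    proof (cases "t < t'")
      case True
      then show ?thesis using that tt by blast
    next
      case False
      then show ?thesis using that[of t' t] tt sym \<open>t \<noteq> t'\<close> by simp
    qed
    show ?thesis
    proof (rule chord[OF ij(1-3)])
      show "j \<noteq> i + 1" using ij by auto
      show "\<not> (i = 0 \<and> j = k - 1)" using ij walk by (auto simp: closed_walk_def)
    qed
  qed (rule induced)
next
  case False
  show ?thesis
  proof (cases "inj_on g {..<k}")
    case True
    then show ?thesis using False short by simp
  next
    case False
    then obtain i j where "i < k" "j < k" "i \<noteq> j" "g i = g j" unfolding inj_on_def by blast
    then show ?thesis using repeated[of i j] repeated[of j i] by (cases "i < j") auto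
  qed
qed

text \<open>Shortcutting a closed walk at a repeated vertex or along a chord splits it into two shorter
  closed walks whose weights add up to the original one (up to twice the chord weight), so parity
  propagates down to induced cycles.\<close>
lemma even_closed_walk_weight:
  assumes sym: "\<And>x y. R x y \<Longrightarrow> R y x" and irrefl: "\<And>x. \<not> R x x"
    and weight_sym: "\<And>x y. R x y \<Longrightarrow> f x y = f y x"
    and induced: "\<And>k g. induced_cycle R k g \<Longrightarrow> even (closed_walk_weight f k g)"
    and walk: "closed_walk R k g"
  shows "even (closed_walk_weight f k g)"
  using walk
proof (induction k arbitrary: g rule: less_induct)
  case (less k)
  have k: "k \<ge> 1" and edge: "\<And>t. t < k \<Longrightarrow> R (g t) (g ((t + 1) mod k))"
    using less.prems unfolding closed_walk_def by auto
  consider (repeated) i j where "i < j" "j < k" "g i = g j"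
    | (short) "inj_on g {..<k}" "k < 3"
    | (induced) "induced_cycle R k g"
    | (chord) i j where "i < j" "j < k" "R (g i) (g j)" "j \<noteq> i + 1" "\<not> (i = 0 \<and> j = k - 1)"
    using closed_walk_cases[OF sym irrefl less.prems] by blast
  then show ?case
  proof cases
    case (repeated i j)
    obtain k1 g1 k2 g2 where "closed_walk R k1 g1" "closed_walk R k2 g2" "k1 < k" "k2 < k"
      "closed_walk_weight f k1 g1 + closed_walk_weight f k2 g2 = closed_walk_weight f k g"
      using closed_walk_split_at_repeated_vertex[OF less.prems \<open>i < j\<close> \<open>j < k\<close> \<open>g i = g j\<close>] by blast
    then show ?thesis using less.IH by (metis even_add)
  next
    case short
    then consider "k = 1" | "k = 2" using k by linarith
    then show ?thesis
    proof cases
      case 1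
      then show ?thesis using edge[of 0] irrefl by simp
    next
      case 2
      then have "closed_walk_weight f k g = f (g 0) (g 1) + f (g 1) (g 0)"
        unfolding closed_walk_weight_def by (simp add: numeral_2_eq_2)
      then show ?thesis using weight_sym[of "g 0" "g 1"] edge[of 0] 2 by simp
    qed
  next
    case induced
    then show ?thesis using assms(4) by blast
  next
    case (chord i j)
    obtain k1 g1 k2 g2 where "closed_walk R k1 g1" "closed_walk R k2 g2" "k1 < k" "k2 < k"
      "closed_walk_weight f k1 g1 + closed_walk_weight f k2 g2
         = closed_walk_weight f k g + f (g j) (g i) + f (g i) (g j)"
      using closed_walk_split_at_chord[OF less.prems \<open>i < j\<close> \<open>j < k\<close> \<open>R (g i) (g j)\<close>
          sym[OF \<open>R (g i) (g j)\<close>] \<open>j \<noteq> i + 1\<close> \<open>\<not> (i = 0 \<and> j = k - 1)\<close>] by blast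
    moreover have "f (g j) (g i) = f (g i) (g j)" using weight_sym \<open>R (g i) (g j)\<close> by metis
    ultimately show ?thesis using less.IH by (metis even_add)
  qed
qed

definition walk :: "('a \<Rightarrow> 'a \<Rightarrow> bool) \<Rightarrow> nat \<Rightarrow> (nat \<Rightarrow> 'a) \<Rightarrow> bool"
  where "walk R L h \<longleftrightarrow> (\<forall>t<L. R (h t) (h (Suc t)))"

definition walk_weight :: "('a \<Rightarrow> 'a \<Rightarrow> nat) \<Rightarrow> nat \<Rightarrow> (nat \<Rightarrow> 'a) \<Rightarrow> nat"
  where "walk_weight f L h = (\<Sum>t<L. f (h t) (h (Suc t)))"

lemma walk_snoc:
  assumes "walk R L h" "R (h L) v"
  shows "walk R (Suc L) (h(Suc L := v))"
    and "walk_weight f (Suc L) (h(Suc L := v)) = walk_weight f L h + f (h L) v"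
  using assms by (auto simp: walk_def walk_weight_def less_Suc_eq)

lemma rtranclp_imp_walk:
  assumes "R\<^sup>*\<^sup>* x y"
  obtains L h where "h 0 = x" "h L = y" "walk R L h"
  using assms
proof (induction arbitrary: thesis rule: rtranclp_induct)
  case base
  show ?case by (rule base[of "\<lambda>_. x" 0]) (simp_all add: walk_def)
next
  case (step y z)
  obtain L h where h: "h 0 = x" "h L = y" "walk R L h" using step.IH by blast
  show ?case
  proof (rule step.prems)
    show "walk R (Suc L) (h(Suc L := z))" using h step.hyps(2) by (intro walk_snoc(1)) simp_all
  qed (use h in simp_all)
qed

text \<open>Two walks with common endpoints form a closed walk (the second one traversed backwards).\<close>
lemma even_walk_weight_add:
  assumes closed_even: "\<And>k g. closed_walk R k g \<Longrightarrow> even (closed_walk_weight f k g)"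
    and sym: "\<And>x y. R x y \<Longrightarrow> R y x" and weight_sym: "\<And>x y. R x y \<Longrightarrow> f x y = f y x"
    and walks: "walk R L1 h1" "walk R L2 h2" and ends: "h1 0 = h2 0" "h1 L1 = h2 L2"
  shows "even (walk_weight f L1 h1 + walk_weight f L2 h2)"
proof (cases "L1 + L2 = 0")
  case True
  then show ?thesis by (simp add: walk_weight_def)
next
  case False
  define k where "k = L1 + L2"
  define g where "g t = (if t \<le> L1 then h1 t else h2 (k - t))" for t
  have g_second: "g t = h2 (k - t)" if "L1 \<le> t" "t \<le> k" for t
    using that ends unfolding g_def k_def by auto
  have "g k = g 0" using g_second[of k] ends unfolding g_def k_def by simp
  then have g_next: "g ((t + 1) mod k) = g (Suc t)" if "t < k" for t
    using that by (cases "Suc t = k") auto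
  have step_back: "R (g t) (g (Suc t)) \<and> f (g t) (g (Suc t)) = f (h2 m) (h2 (Suc m))"
    if "L1 \<le> t" "t < k" "m = k - Suc t" for t m
  proof -
    have "m < L2" "Suc m = k - t" using that unfolding k_def by auto
    then have "R (h2 m) (h2 (Suc m))" using walks(2) unfolding walk_def by blast
    moreover have "g t = h2 (Suc m)" "g (Suc t) = h2 m"
      using g_second[of t] g_second[of "Suc t"] that \<open>Suc m = k - t\<close> by auto
    ultimately show ?thesis using sym weight_sym by metis
  qed
  have "closed_walk R k g"
    unfolding closed_walk_def
  proof (intro conjI allI impI)
    show "k \<ge> 1" using False k_def by linarith
    fix t assume "t < k"
    show "R (g t) (g ((t + 1) mod k))"
    proof (cases "t < L1")
      case True
      then show ?thesis using walks(1) g_next[OF \<open>t < k\<close>] unfolding walk_def g_def by simp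
    next
      case False
      then show ?thesis using step_back[of t "k - Suc t"] g_next \<open>t < k\<close> by simp
    qed
  qed
  moreover have "closed_walk_weight f k g = walk_weight f L1 h1 + walk_weight f L2 h2"
  proof -
    have "closed_walk_weight f k g = (\<Sum>t<L1. f (g t) (g (Suc t))) + (\<Sum>t<L2. f (g (L1 + t)) (g (Suc (L1 + t))))"
      unfolding closed_walk_weight_def using g_next sum_lessThan_add[of "\<lambda>t. f (g t) (g (Suc t))" L1 L2]
      by (simp add: k_def)
    also have "(\<Sum>t<L1. f (g t) (g (Suc t))) = walk_weight f L1 h1"
      unfolding walk_weight_def g_def by (intro sum.cong) auto
    also have "(\<Sum>t<L2. f (g (L1 + t)) (g (Suc (L1 + t)))) = (\<Sum>t<L2. f (h2 (L2 - Suc t)) (h2 (Suc (L2 - Suc t))))"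
      using step_back by (intro sum.cong) (auto simp: k_def)
    also have "\<dots> = walk_weight f L2 h2"
      unfolding walk_weight_def by (rule sum.nat_diff_reindex[where g = "\<lambda>m. f (h2 m) (h2 (Suc m))"])
    finally show ?thesis .
  qed
  ultimately show ?thesis using closed_even by metis
qed

text \<open>\<open>s v = 1\<close> iff some, equivalently every, walk from \<open>r\<close> to \<open>v\<close> has even weight.\<close>
lemma switching_signs:
  assumes closed_even: "\<And>k g. closed_walk R k g \<Longrightarrow> even (closed_walk_weight f k g)"
    and sym: "\<And>x y. R x y \<Longrightarrow> R y x" and weight_sym: "\<And>x y. R x y \<Longrightarrow> f x y = f y x"
  obtains s :: "'a \<Rightarrow> real" where "\<And>v. \<bar>s v\<bar> = 1"
    and "\<And>u v. R\<^sup>*\<^sup>* r u \<Longrightarrow> R u v \<Longrightarrow> s u * s v = (-1) ^ f u v"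
proof -
  define s :: "'a \<Rightarrow> real" where
    "s v = (if \<exists>L h. h 0 = r \<and> h L = v \<and> walk R L h \<and> even (walk_weight f L h) then 1 else -1)" for v
  have s_walk: "s v = (-1) ^ walk_weight f L h" if "walk R L h" "h 0 = r" "h L = v" for L h v
  proof (cases "even (walk_weight f L h)")
    case True
    then show ?thesis using that unfolding s_def by auto
  next
    case False
    have "odd (walk_weight f L' h')" if "h' 0 = r" "h' L' = v" "walk R L' h'" for L' h'
      using even_walk_weight_add[OF closed_even sym weight_sym \<open>walk R L h\<close> \<open>walk R L' h'\<close>] that
        \<open>h 0 = r\<close> \<open>h L = v\<close> False by auto
    then show ?thesis using False unfolding s_def by auto
  qed
  show ?thesis
  proof (rule that)
    show "\<bar>s v\<bar> = 1" for v by (simp add: s_def)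
  next
    fix u v assume "R\<^sup>*\<^sup>* r u" "R u v"
    then obtain L h where h: "h 0 = r" "h L = u" "walk R L h" by (blast elim: rtranclp_imp_walk)
    have "s v = (-1) ^ (walk_weight f L h + f u v)"
      using s_walk[OF walk_snoc(1)[OF h(3)]] walk_snoc(2)[OF h(3)] h \<open>R u v\<close> by simp
    moreover have "s u = (-1) ^ walk_weight f L h" using s_walk[OF h(3,1,2)] .
    ultimately show "s u * s v = (-1) ^ f u v" by (simp add: power_add mult.assoc[symmetric] flip: power2_eq_square power_mult)
  qed
qed

section \<open>The double cover\<close>

definition pushforward :: "(nat \<Rightarrow> nat) \<Rightarrow> nat \<Rightarrow> (nat \<Rightarrow> real) \<Rightarrow> nat \<Rightarrow> real"
  where "pushforward g k Y i = (if i \<in> g ` {..<k} then Y (the_inv_into {..<k} g i) else 0)"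

lemma sum_pushforward_mult:
  assumes inj: "inj_on g {..<k}" and range: "g ` {..<k} \<subseteq> {..<n}"
  shows "(\<Sum>i<n. pushforward g k Y i * H i) = (\<Sum>t<k. Y t * H (g t))"
proof -
  have "(\<Sum>i<n. pushforward g k Y i * H i) = (\<Sum>i\<in>g ` {..<k}. pushforward g k Y i * H i)"
    using range by (intro sum.mono_neutral_right) (auto simp: pushforward_def)
  also have "\<dots> = (\<Sum>t<k. Y t * H (g t))"
    using inj by (simp add: sum.reindex pushforward_def the_inv_into_f_f)
  finally show ?thesis .
qed

lemma sum_squares_pushforward:
  assumes "inj_on g {..<k}" "g ` {..<k} \<subseteq> {..<n}"
  shows "(\<Sum>i<n. (pushforward g k Y i)\<^sup>2) = (\<Sum>t<k. (Y t)\<^sup>2)"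
  using sum_pushforward_mult[OF assms, of Y "pushforward g k Y"] assms(1)
  by (simp add: power2_eq_square pushforward_def the_inv_into_f_f)

lemma bilinear_form_pushforward:
  assumes "inj_on g {..<k}" "g ` {..<k} \<subseteq> {..<n}"
  shows "bilinear_form n W (pushforward g k Y) (pushforward g k Z)
    = (\<Sum>t<k. \<Sum>t'<k. Y t * W (g t) (g t') * Z t')"
proof -
  have "bilinear_form n W (pushforward g k Y) (pushforward g k Z)
      = (\<Sum>i<n. pushforward g k Y i * (\<Sum>j<n. pushforward g k Z j * W i j))"
    by (simp add: bilinear_form_def sum_distrib_left mult_ac)
  also have "\<dots> = (\<Sum>t<k. Y t * (\<Sum>t'<k. Z t' * W (g t) (g t')))"
    by (simp add: sum_pushforward_mult[OF assms])
  finally show ?thesis by (simp add: sum_distrib_left mult_ac)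
qed

lemma sum_cycle_neighbours:
  fixes F :: "nat \<Rightarrow> nat \<Rightarrow> real"
  assumes k: "k \<ge> 3"
    and vanish: "\<And>t t'. t < k \<Longrightarrow> t' < k \<Longrightarrow> t \<noteq> t' \<Longrightarrow> t' \<noteq> (t + 1) mod k \<Longrightarrow> t \<noteq> (t' + 1) mod k
      \<Longrightarrow> F t t' = 0"
  shows "(\<Sum>t<k. \<Sum>t'<k. F t t') = (\<Sum>t<k. F t t + F t ((t + 1) mod k) + F ((t + 1) mod k) t)"
proof -
  define prev where "prev t = (if t = 0 then k - 1 else t - 1)" for t
  have next_eq: "(t + 1) mod k = (if t + 1 = k then 0 else t + 1)" if "t < k" for t
    using that by auto
  have prev_next: "prev (Suc t mod k) = t" if "t < k" for t
    using that k unfolding prev_def by (cases "Suc t = k") auto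
  have inner: "(\<Sum>t'<k. F t t') = F t t + F t ((t + 1) mod k) + F t (prev t)" if t: "t < k" for t
  proof -
    have "(\<Sum>t'<k. F t t') = (\<Sum>t'\<in>{t, (t + 1) mod k, prev t}. F t t')"
    proof (rule sum.mono_neutral_right)
      show "\<forall>t'\<in>{..<k} - {t, (t + 1) mod k, prev t}. F t t' = 0"
      proof
        fix t' assume t': "t' \<in> {..<k} - {t, (t + 1) mod k, prev t}"
        then have "t \<noteq> (t' + 1) mod k" using prev_next[of t'] by auto
        with t t' show "F t t' = 0" by (intro vanish) auto
      qed
    qed (use t k in \<open>auto simp: prev_def\<close>)
    also have "\<dots> = F t t + F t ((t + 1) mod k) + F t (prev t)"
      using t k unfolding prev_def next_eq[OF t] by (simp add: add.assoc)
    finally show ?thesis .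
  qed
  have "(\<Sum>t<k. F t (prev t)) = (\<Sum>t<k. F ((1 + t) mod k) (prev ((1 + t) mod k)))"
    using k by (intro sum_lessThan_rotate[symmetric]) simp
  also have "\<dots> = (\<Sum>t<k. F ((t + 1) mod k) t)"
    by (intro sum.cong) (simp_all add: prev_next add.commute)
  finally show ?thesis
    using inner by (simp add: sum.distrib)
qed

text \<open>Going twice around a cycle with an odd number of marked edges, and changing sheets at
  every marked edge, is one closed walk of length \<open>2k\<close> in the double cover; hence any prescribed
  edge signs \<open>e\<close> are realised by vertex signs \<open>Y\<close>, \<open>Z\<close> on the two sheets.\<close>
lemma double_cover_signs:
  fixes e :: "nat \<Rightarrow> real" and marked :: "nat \<Rightarrow> bool"
  assumes e: "\<And>t. t < k \<Longrightarrow> \<bar>e t\<bar> = 1" and odd: "odd (card {t. t < k \<and> marked t})"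
  obtains Y Z :: "nat \<Rightarrow> real"
  where "\<And>t. t < k \<Longrightarrow> \<bar>Y t\<bar> = 1" "\<And>t. t < k \<Longrightarrow> \<bar>Z t\<bar> = 1"
    and "\<And>t. t < k \<Longrightarrow> \<not> marked t \<Longrightarrow> Y t * Y ((t + 1) mod k) = e t \<and> Z t * Z ((t + 1) mod k) = e t"
    and "\<And>t. t < k \<Longrightarrow> marked t \<Longrightarrow> Y t * Z ((t + 1) mod k) = e t \<and> Z t * Y ((t + 1) mod k) = e t"
proof -
  define \<sigma> where "\<sigma> t = (\<Prod>r<t. e r)" for t
  define c where "c t = card {r. r < t \<and> marked r}" for t
  define Y where "Y t = \<sigma> t * (if even (c t) then 1 else \<sigma> k)" for t
  define Z where "Z t = \<sigma> t * (if even (c t) then \<sigma> k else 1)" for t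
  have \<sigma>: "\<bar>\<sigma> t\<bar> = 1" if "t \<le> k" for t
    using that e by (simp add: \<sigma>_def abs_prod)
  have YZ: "\<bar>Y t\<bar> = 1 \<and> \<bar>Z t\<bar> = 1" if "t \<le> k" for t
    using \<sigma>[OF that] \<sigma>[of k] by (simp add: Y_def Z_def abs_mult)
  have step: "Y (Suc t) = (if marked t then Z t else Y t) * e t \<and> Z (Suc t) = (if marked t then Y t else Z t) * e t" for t
  proof -
    have "\<sigma> (Suc t) = \<sigma> t * e t" by (simp add: \<sigma>_def)
    moreover have "c (Suc t) = c t + (if marked t then 1 else 0)"
      by (simp add: c_def card_lessThan_filter_Suc)
    ultimately show ?thesis unfolding Y_def Z_def by (cases "marked t"; cases "even (c t)") simp_all
  qed
  have "\<sigma> k * \<sigma> k = 1" using \<sigma>[of k] abs_mult_self_eq[of "\<sigma> k"] by simp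
  then have wrap: "Y k = Y 0 \<and> Z k = Z 0"
    using odd by (simp add: Y_def Z_def c_def \<sigma>_def)
  have next_vertex: "Y ((t + 1) mod k) = Y (Suc t) \<and> Z ((t + 1) mod k) = Z (Suc t)" if "t < k" for t
    using that wrap by (cases "Suc t = k") auto
  have square: "x * x = 1" if "\<bar>x\<bar> = 1" for x :: real
    using that abs_mult_self_eq[of x] by simp
  show ?thesis
  proof (rule that)
    fix t assume t: "t < k"
    show "\<bar>Y t\<bar> = 1" "\<bar>Z t\<bar> = 1" using YZ t by auto
    show "Y t * Y ((t + 1) mod k) = e t \<and> Z t * Z ((t + 1) mod k) = e t" if "\<not> marked t"
      using that next_vertex[OF t] step[of t] square YZ t by (simp add: mult.assoc[symmetric])
    show "Y t * Z ((t + 1) mod k) = e t \<and> Z t * Y ((t + 1) mod k) = e t" if "marked t"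
      using that next_vertex[OF t] step[of t] square YZ t by (simp add: mult.assoc[symmetric])
  qed
qed

lemma bilinear_form_pushforward_cycle:
  assumes k: "k \<ge> 3" and cycle: "inj_on g {..<k}" "g ` {..<k} \<subseteq> {..<n}"
    and W_sym: "\<And>i j. i < n \<Longrightarrow> j < n \<Longrightarrow> W i j = W j i"
    and chordless: "\<And>t t'. t < k \<Longrightarrow> t' < k \<Longrightarrow> t \<noteq> t' \<Longrightarrow> t' \<noteq> (t + 1) mod k \<Longrightarrow> t \<noteq> (t' + 1) mod k
      \<Longrightarrow> W (g t) (g t') = 0"
    and edges: "\<And>t. t < k \<Longrightarrow> W (g t) (g ((t + 1) mod k)) * (Y t * Z ((t + 1) mod k)) = c t
      \<and> W (g t) (g ((t + 1) mod k)) * (Y ((t + 1) mod k) * Z t) = c t"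
  shows "bilinear_form n W (pushforward g k Y) (pushforward g k Z)
    = (\<Sum>t<k. Y t * W (g t) (g t) * Z t) + 2 * (\<Sum>t<k. c t)"
proof -
  have "bilinear_form n W (pushforward g k Y) (pushforward g k Z)
      = (\<Sum>t<k. Y t * W (g t) (g t) * Z t + Y t * W (g t) (g ((t + 1) mod k)) * Z ((t + 1) mod k)
              + Y ((t + 1) mod k) * W (g ((t + 1) mod k)) (g t) * Z t)"
    unfolding bilinear_form_pushforward[OF cycle] by (rule sum_cycle_neighbours[OF k]) (simp add: chordless)
  also have "\<dots> = (\<Sum>t<k. Y t * W (g t) (g t) * Z t + 2 * c t)"
  proof (intro sum.cong refl)
    fix t assume t: "t \<in> {..<k}"
    moreover have "(t + 1) mod k \<in> {..<k}" using k by simp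
    ultimately have "g t \<in> {..<n}" "g ((t + 1) mod k) \<in> {..<n}" using cycle(2) by blast+
    then have "W (g ((t + 1) mod k)) (g t) = W (g t) (g ((t + 1) mod k))" using W_sym by simp
    with edges[of t] t
    show "Y t * W (g t) (g t) * Z t + Y t * W (g t) (g ((t + 1) mod k)) * Z ((t + 1) mod k)
        + Y ((t + 1) mod k) * W (g ((t + 1) mod k)) (g t) * Z t = Y t * W (g t) (g t) * Z t + 2 * c t"
      by (simp add: algebra_simps)
  qed
  finally show ?thesis by (simp add: sum.distrib sum_distrib_left)
qed

text \<open>The quadratic form at \<open>(y, z)\<close> of the block matrix \<open>[[P, \<surd>2 Q], [\<surd>2 Q, P]]\<close>.\<close>
definition double_cover_form
  :: "nat \<Rightarrow> (nat \<Rightarrow> nat \<Rightarrow> real) \<Rightarrow> (nat \<Rightarrow> nat \<Rightarrow> real) \<Rightarrow> (nat \<Rightarrow> real) \<Rightarrow> (nat \<Rightarrow> real) \<Rightarrow> real"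
  where "double_cover_form n P Q y z
    = bilinear_form n P y y + bilinear_form n P z z + 2 * sqrt 2 * bilinear_form n Q y z"

text \<open>An induced cycle with an odd number of \<open>\<plusminus>\<surd>2\<close>-edges lifts to a cycle of length \<open>2k\<close> in the
  double cover. Signing its vertices so that every edge contributes with the sign of the diagonal
  sum \<open>C\<close> gives a test vector of norm \<open>2k\<close> whose Rayleigh quotient exceeds \<open>2\<close>, because
  every edge weight is at least \<open>1\<close> in absolute value and the \<open>\<surd>2\<close>-edges exceed it.\<close>
lemma even_sqrt2_edges_of_induced_cycle:
  fixes P Q :: "nat \<Rightarrow> nat \<Rightarrow> real" and k :: nat and g :: "nat \<Rightarrow> nat"
  assumes bound: "\<And>y z. \<bar>double_cover_form n P Q y z\<bar> \<le> 2 * ((\<Sum>i<n. (y i)\<^sup>2) + (\<Sum>i<n. (z i)\<^sup>2))"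
    and P_sym: "\<And>i j. i < n \<Longrightarrow> j < n \<Longrightarrow> P i j = P j i"
    and Q_sym: "\<And>i j. i < n \<Longrightarrow> j < n \<Longrightarrow> Q i j = Q j i"
    and Q_diag: "\<And>i. i < n \<Longrightarrow> Q i i = 0"
    and k: "k \<ge> 3" and cycle: "inj_on g {..<k}" "g ` {..<k} \<subseteq> {..<n}"
    and chordless: "\<And>t t'. t < k \<Longrightarrow> t' < k \<Longrightarrow> t \<noteq> t' \<Longrightarrow> t' \<noteq> (t + 1) mod k \<Longrightarrow> t \<noteq> (t' + 1) mod k
      \<Longrightarrow> P (g t) (g t') = 0 \<and> Q (g t) (g t') = 0"
    and edges: "\<And>t. t < k \<Longrightarrow>
      (Q (g t) (g ((t + 1) mod k)) = 0 \<and> 1 \<le> \<bar>P (g t) (g ((t + 1) mod k))\<bar>) \<or>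
      (P (g t) (g ((t + 1) mod k)) = 0 \<and> \<bar>Q (g t) (g ((t + 1) mod k))\<bar> = 1)"
  shows "even (card {t. t < k \<and> Q (g t) (g ((t + 1) mod k)) \<noteq> 0})"
proof (rule ccontr)
  define nxt where "nxt t = (t + 1) mod k" for t
  define p where "p t = P (g t) (g (nxt t))" for t
  define q where "q t = Q (g t) (g (nxt t))" for t
  assume "odd (card {t. t < k \<and> Q (g t) (g ((t + 1) mod k)) \<noteq> 0})"
  then have odd: "odd (card {t. t < k \<and> q t \<noteq> 0})" by (simp add: q_def nxt_def)
  have edge: "(q t = 0 \<and> 1 \<le> \<bar>p t\<bar>) \<or> (p t = 0 \<and> \<bar>q t\<bar> = 1)" if "t < k" for t
    using edges[OF that] by (simp add: p_def q_def nxt_def)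
  have in_range: "g t < n" "g (nxt t) < n" if "t < k" for t
  proof -
    have "nxt t < k" using k by (simp add: nxt_def)
    then show "g t < n" "g (nxt t) < n" using that cycle(2) by auto
  qed
  define C where "C = (\<Sum>t<k. P (g t) (g t))"
  define \<tau> :: real where "\<tau> = (if C \<ge> 0 then 1 else -1)"
  define e where "e t = \<tau> * (if q t \<noteq> 0 then sgn (q t) else sgn (p t))" for t
  have e: "\<bar>e t\<bar> = 1" if "t < k" for t
    using edge[OF that] by (auto simp: e_def \<tau>_def abs_mult abs_sgn_eq)
  obtain Y Z where Y: "\<And>t. t < k \<Longrightarrow> \<bar>Y t\<bar> = 1" and Z: "\<And>t. t < k \<Longrightarrow> \<bar>Z t\<bar> = 1"
    and same_sheet: "\<And>t. t < k \<Longrightarrow> \<not> q t \<noteq> 0 \<Longrightarrow>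
      Y t * Y ((t + 1) mod k) = e t \<and> Z t * Z ((t + 1) mod k) = e t"
    and other_sheet: "\<And>t. t < k \<Longrightarrow> q t \<noteq> 0 \<Longrightarrow>
      Y t * Z ((t + 1) mod k) = e t \<and> Z t * Y ((t + 1) mod k) = e t"
    using double_cover_signs[of k e "\<lambda>t. q t \<noteq> 0", OF e odd] by blast
  have p_edge: "p t * (Y t * Y (nxt t)) = \<tau> * \<bar>p t\<bar> \<and> p t * (Z t * Z (nxt t)) = \<tau> * \<bar>p t\<bar>"
    if "t < k" for t
    using edge[OF that] same_sheet[OF that] unfolding nxt_def by (auto simp: e_def abs_sgn mult_ac)
  have q_edge: "q t * (Y t * Z (nxt t)) = \<tau> * \<bar>q t\<bar> \<and> q t * (Z t * Y (nxt t)) = \<tau> * \<bar>q t\<bar>"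
    if "t < k" for t
    using other_sheet[OF that] unfolding nxt_def by (cases "q t = 0") (auto simp: e_def abs_sgn mult_ac)
  have square: "V t * V t = 1" if "\<bar>V t\<bar> = 1" for V :: "nat \<Rightarrow> real" and t
    using that abs_mult_self_eq[of "V t"] by simp
  have form_P: "bilinear_form n P (pushforward g k V) (pushforward g k V) = C + 2 * (\<Sum>t<k. \<tau> * \<bar>p t\<bar>)"
    if V: "\<And>t. t < k \<Longrightarrow> \<bar>V t\<bar> = 1"
      and V_edge: "\<And>t. t < k \<Longrightarrow> p t * (V t * V (nxt t)) = \<tau> * \<bar>p t\<bar>" for V
  proof -
    have "V t * P (g t) (g t) * V t = P (g t) (g t)" if "t < k" for t
      using square[of V t] V[OF that] by (simp add: algebra_simps)
    then have "(\<Sum>t<k. V t * P (g t) (g t) * V t) = C" unfolding C_def by (intro sum.cong) simp_all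
    moreover have "bilinear_form n P (pushforward g k V) (pushforward g k V)
        = (\<Sum>t<k. V t * P (g t) (g t) * V t) + 2 * (\<Sum>t<k. \<tau> * \<bar>p t\<bar>)"
      using V_edge chordless unfolding p_def nxt_def
      by (intro bilinear_form_pushforward_cycle[OF k cycle P_sym]) (auto simp: mult_ac)
    ultimately show ?thesis by simp
  qed
  have form_Q: "bilinear_form n Q (pushforward g k Y) (pushforward g k Z) = 2 * (\<Sum>t<k. \<tau> * \<bar>q t\<bar>)"
    using q_edge Q_sym Q_diag chordless in_range(1) unfolding q_def nxt_def
    by (subst bilinear_form_pushforward_cycle[OF k cycle]) (auto simp: mult_ac)
  have norm: "(\<Sum>i<n. (pushforward g k V i)\<^sup>2) = k" if "\<And>t. t < k \<Longrightarrow> \<bar>V t\<bar> = 1" for V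
  proof -
    have "(\<Sum>i<n. (pushforward g k V i)\<^sup>2) = (\<Sum>t<k. (V t)\<^sup>2)"
      by (rule sum_squares_pushforward[OF cycle])
    also have "\<dots> = (\<Sum>t<k. 1)"
      using that square[of V] by (intro sum.cong) (auto simp: power2_eq_square)
    finally show ?thesis by simp
  qed
  define w where "w t = \<bar>p t\<bar> + sqrt 2 * \<bar>q t\<bar>" for t
  have "double_cover_form n P Q (pushforward g k Y) (pushforward g k Z) = 2 * C + 4 * \<tau> * (\<Sum>t<k. w t)"
    using form_P[OF Y] form_P[OF Z] p_edge form_Q
    by (simp add: double_cover_form_def w_def sum.distrib sum_distrib_left algebra_simps)
  with bound[of "pushforward g k Y" "pushforward g k Z"] norm[OF Y] norm[OF Z]
  have upper: "\<bar>2 * C + 4 * \<tau> * (\<Sum>t<k. w t)\<bar> \<le> 4 * k" by simp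
  obtain t0 where t0: "t0 < k" "q t0 \<noteq> 0"
    using odd by (metis (mono_tags, lifting) Collect_empty_eq card.empty even_zero)
  have "real k < (\<Sum>t<k. w t)"
  proof -
    have "w t \<ge> 1" if "t < k" for t
      using edge[OF that] by (auto simp: w_def)
    moreover have "w t0 > 1" using edge[OF t0(1)] t0(2) by (simp add: w_def)
    ultimately have "(\<Sum>t<k. 1) < (\<Sum>t<k. w t)"
      using t0 by (intro sum_strict_mono_ex1) auto
    then show ?thesis by simp
  qed
  moreover have "\<bar>2 * C + 4 * \<tau> * (\<Sum>t<k. w t)\<bar> \<ge> 2 * \<bar>C\<bar> + 4 * (\<Sum>t<k. w t)"
    unfolding \<tau>_def by (simp split: if_split) arith
  ultimately show False using upper by simp
qed

section \<open>Symmetric matrices over \<open>\<int>[\<surd>2]\<close>\<close>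

lemma zsqrt2_mat_carrier [simp]:
  "zsqrt2_mat n p q \<in> carrier_mat n n" "dim_row (zsqrt2_mat n p q) = n" "dim_col (zsqrt2_mat n p q) = n"
  "zsqrt2_conj_mat n p q \<in> carrier_mat n n" "dim_row (zsqrt2_conj_mat n p q) = n"
  "dim_col (zsqrt2_conj_mat n p q) = n"
  by (simp_all add: zsqrt2_mat_def zsqrt2_conj_mat_def)

lemma zsqrt2_mat_index:
  assumes "i < n" "j < n"
  shows "zsqrt2_mat n p q $$ (i, j) = real_of_int (p i j) + sqrt 2 * real_of_int (q i j)"
    and "zsqrt2_conj_mat n p q $$ (i, j) = real_of_int (p i j) - sqrt 2 * real_of_int (q i j)"
  using assms by (simp_all add: zsqrt2_mat_def zsqrt2_conj_mat_def)

lemma symmetric_zsqrt2_matD: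
  assumes "symmetric_mat (zsqrt2_mat n p q)" "i < n" "j < n"
  shows "p i j = p j i" "q i j = q j i"
  using assms of_int_add_sqrt2_eq_iff[of "p i j" "q i j" "p j i" "q j i"]
  by (auto simp: symmetric_mat_def zsqrt2_mat_index)

lemma transpose_zsqrt2_mat:
  assumes "symmetric_mat (zsqrt2_mat n p q)"
  shows "transpose_mat (zsqrt2_mat n p q) = zsqrt2_mat n p q"
    and "transpose_mat (zsqrt2_conj_mat n p q) = zsqrt2_conj_mat n p q"
  using symmetric_zsqrt2_matD[OF assms] by (auto intro!: eq_matI simp: zsqrt2_mat_index)

lemma quadratic_form_zsqrt2_mat:
  "bilinear_form n (\<lambda>i j. zsqrt2_mat n p q $$ (i, j)) x x
     = bilinear_form n (\<lambda>i j. of_int (p i j)) x x + sqrt 2 * bilinear_form n (\<lambda>i j. of_int (q i j)) x x"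
  "bilinear_form n (\<lambda>i j. zsqrt2_conj_mat n p q $$ (i, j)) x x
     = bilinear_form n (\<lambda>i j. of_int (p i j)) x x - sqrt 2 * bilinear_form n (\<lambda>i j. of_int (q i j)) x x"
  by (simp_all add: bilinear_form_def zsqrt2_mat_index algebra_simps sum.distrib sum_subtractf sum_distrib_left)

text \<open>Adding the bounds for \<open>A\<close> at \<open>y + z\<close> and for its conjugate at \<open>y - z\<close>: the double cover is
  similar to \<open>A \<oplus> A\<^sup>\<sigma>\<close>.\<close>
lemma abs_double_cover_form_zsqrt2_le:
  assumes sym: "symmetric_mat (zsqrt2_mat n p q)"
    and eig: "eigs_in_interval (zsqrt2_mat n p q)" and eig_conj: "eigs_in_interval (zsqrt2_conj_mat n p q)"
  shows "\<bar>double_cover_form n (\<lambda>i j. of_int (p i j)) (\<lambda>i j. of_int (q i j)) y z\<bar>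
    \<le> 2 * ((\<Sum>i<n. (y i)\<^sup>2) + (\<Sum>i<n. (z i)\<^sup>2))"
proof -
  let ?P = "\<lambda>i j. real_of_int (p i j)" and ?Q = "\<lambda>i j. real_of_int (q i j)"
  let ?u = "\<lambda>i. y i + z i" and ?w = "\<lambda>i. y i - z i"
  have "\<bar>quadratic_form (zsqrt2_mat n p q) ?u\<bar> \<le> 2 * (\<Sum>i<n. (?u i)\<^sup>2)"
    using abs_quadratic_form_le[OF _ transpose_zsqrt2_mat(1)[OF sym] eig] by simp
  moreover have "\<bar>quadratic_form (zsqrt2_conj_mat n p q) ?w\<bar> \<le> 2 * (\<Sum>i<n. (?w i)\<^sup>2)"
    using abs_quadratic_form_le[OF _ transpose_zsqrt2_mat(2)[OF sym] eig_conj] by simp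
  moreover have "quadratic_form (zsqrt2_mat n p q) ?u + quadratic_form (zsqrt2_conj_mat n p q) ?w
      = 2 * double_cover_form n ?P ?Q y z"
  proof -
    have "bilinear_form n ?Q z y = bilinear_form n ?Q y z"
      using symmetric_zsqrt2_matD[OF sym] by (intro bilinear_form_commute) simp
    then show ?thesis
      using bilinear_form_parallelogram[of n ?P y z] bilinear_form_polarization[of n ?Q y z]
      by (simp add: quadratic_form_zsqrt2_mat double_cover_form_def algebra_simps)
  qed
  moreover have "(\<Sum>i<n. (?u i)\<^sup>2) + (\<Sum>i<n. (?w i)\<^sup>2) = (\<Sum>i<n. 2 * (y i)\<^sup>2 + 2 * (z i)\<^sup>2)"
    unfolding sum.distrib[symmetric] by (intro sum.cong) (simp_all add: power2_eq_square algebra_simps)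
  then have "(\<Sum>i<n. (?u i)\<^sup>2) + (\<Sum>i<n. (?w i)\<^sup>2) = 2 * ((\<Sum>i<n. (y i)\<^sup>2) + (\<Sum>i<n. (z i)\<^sup>2))"
    by (simp add: sum.distrib sum_distrib_left)
  ultimately show ?thesis by linarith
qed

lemma zsqrt2_mat_offdiag_cases:
  assumes sym: "symmetric_mat (zsqrt2_mat n p q)" and diag: "\<And>i. i < n \<Longrightarrow> q i i = 0"
    and eig: "eigs_in_interval (zsqrt2_mat n p q)" and eig_conj: "eigs_in_interval (zsqrt2_conj_mat n p q)"
    and ij: "i < n" "j < n" "i \<noteq> j"
  shows "q i j = 0 \<or> (p i j = 0 \<and> \<bar>q i j\<bar> = 1)"
proof (rule zsqrt2_conjugates_abs_le_2)
  let ?g = "\<lambda>t::nat. if t = 0 then i else j"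
  have cycle: "inj_on ?g {..<2}" "?g ` {..<2} \<subseteq> {..<n}" using ij by (auto simp: inj_on_def)
  have two: "{..<2::nat} = {0, 1}" by auto
  \<comment> \<open>the quadratic forms of \<open>A\<close> and \<open>A\<^sup>\<sigma>\<close> at \<open>e\<^sub>i \<plusminus> e\<^sub>j\<close>\<close>
  have "\<bar>real_of_int (p i i) + real_of_int (p j j) + 2 * s * (real_of_int (p i j) + c * sqrt 2 * real_of_int (q i j))\<bar> \<le> 4"
    if s: "s = 1 \<or> s = -1" and c: "c = 1 \<or> c = -1" for s c :: real
  proof -
    define x where "x = pushforward ?g 2 (\<lambda>t. if t = 0 then 1 else s)"
    have "(\<Sum>l<n. (x l)\<^sup>2) = 2"
      using s unfolding x_def sum_squares_pushforward[OF cycle] two by auto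
    moreover have "bilinear_form n W x x = W i i + s * W i j + s * W j i + s * s * W j j" for W
      using ij unfolding x_def bilinear_form_pushforward[OF cycle] two by (simp add: algebra_simps)
    moreover have "\<bar>quadratic_form (zsqrt2_mat n p q) x\<bar> \<le> 2 * (\<Sum>l<n. (x l)\<^sup>2)"
      by (rule abs_quadratic_form_le[OF _ transpose_zsqrt2_mat(1)[OF sym] eig]) simp
    moreover have "\<bar>quadratic_form (zsqrt2_conj_mat n p q) x\<bar> \<le> 2 * (\<Sum>l<n. (x l)\<^sup>2)"
      by (rule abs_quadratic_form_le[OF _ transpose_zsqrt2_mat(2)[OF sym] eig_conj]) simp
    ultimately show ?thesis
      using c s diag[OF ij(1)] diag[OF ij(2)] symmetric_zsqrt2_matD[OF sym ij(2,1)]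
      by (auto simp: quadratic_form_zsqrt2_mat algebra_simps)
  qed
  from this[of 1 1] this[of "-1" 1] this[of 1 "-1"] this[of "-1" "-1"]
  show "\<bar>real_of_int (p i j) + sqrt 2 * real_of_int (q i j)\<bar> \<le> 2"
    and "\<bar>real_of_int (p i j) - sqrt 2 * real_of_int (q i j)\<bar> \<le> 2"
    by (simp_all add: abs_le_iff)
qed

definition sqrt2_weight :: "real mat \<Rightarrow> nat \<Rightarrow> nat \<Rightarrow> nat"
  where "sqrt2_weight A u v = (if \<bar>A $$ (u, v)\<bar> = sqrt 2 then 1 else 0)"

lemma is_cycle_imp_closed_walk:
  assumes "is_cycle A c"
  shows "closed_walk (adj A) (length c) (nth c)"
    and "num_sqrt2_edges A c = closed_walk_weight (sqrt2_weight A) (length c) (nth c)"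
  using assms
  by (auto simp: is_cycle_def closed_walk_def num_sqrt2_edges_def closed_walk_weight_def
      sqrt2_weight_def card_lessThan_filter_eq_sum)

lemma adj_zsqrt2_mat_cases:
  assumes sym: "symmetric_mat (zsqrt2_mat n p q)" and diag: "\<And>i. i < n \<Longrightarrow> q i i = 0"
    and eig: "eigs_in_interval (zsqrt2_mat n p q)" and eig_conj: "eigs_in_interval (zsqrt2_conj_mat n p q)"
    and uv: "adj (zsqrt2_mat n p q) u v"
  shows "(q u v = 0 \<and> p u v \<noteq> 0 \<and> sqrt2_weight (zsqrt2_mat n p q) u v = 0)
    \<or> (p u v = 0 \<and> \<bar>q u v\<bar> = 1 \<and> sqrt2_weight (zsqrt2_mat n p q) u v = 1)"
proof -
  have u: "u < n" "v < n" "u \<noteq> v" and nonzero: "zsqrt2_mat n p q $$ (u, v) \<noteq> 0"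
    using uv by (auto simp: adj_def)
  show ?thesis
    using zsqrt2_mat_offdiag_cases[OF sym diag eig eig_conj u] nonzero abs_of_int_neq_sqrt2[of "p u v"]
    by (auto simp: sqrt2_weight_def zsqrt2_mat_index[OF u(1,2)] abs_mult)
qed

lemma adj_symmetric: "symmetric_mat A \<Longrightarrow> adj A x y \<Longrightarrow> adj A y x"
  by (auto simp: adj_def symmetric_mat_def)

lemma sqrt2_weight_symmetric: "symmetric_mat A \<Longrightarrow> adj A x y \<Longrightarrow> sqrt2_weight A x y = sqrt2_weight A y x"
  by (auto simp: adj_def symmetric_mat_def sqrt2_weight_def)

lemma even_sqrt2_weight_of_induced_cycle:
  assumes sym: "symmetric_mat (zsqrt2_mat n p q)" and diag: "\<And>i. i < n \<Longrightarrow> q i i = 0"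
    and eig: "eigs_in_interval (zsqrt2_mat n p q)" and eig_conj: "eigs_in_interval (zsqrt2_conj_mat n p q)"
    and cycle: "induced_cycle (adj (zsqrt2_mat n p q)) k g"
  shows "even (closed_walk_weight (sqrt2_weight (zsqrt2_mat n p q)) k g)"
proof -
  let ?A = "zsqrt2_mat n p q"
  have k: "k \<ge> 3" and inj: "inj_on g {..<k}" and edge: "\<And>t. t < k \<Longrightarrow> adj ?A (g t) (g ((t + 1) mod k))"
    and induced: "\<And>t t'. t < k \<Longrightarrow> t' < k \<Longrightarrow> adj ?A (g t) (g t') \<Longrightarrow> t' = (t + 1) mod k \<or> t = (t' + 1) mod k"
    using cycle unfolding induced_cycle_def closed_walk_def by auto
  have range: "g ` {..<k} \<subseteq> {..<n}" using edge by (auto simp: adj_def)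
  note cases = adj_zsqrt2_mat_cases[OF sym diag eig eig_conj edge]
  have "closed_walk_weight (sqrt2_weight ?A) k g = card {t. t < k \<and> of_int (q (g t) (g ((t + 1) mod k))) \<noteq> (0::real)}"
    unfolding closed_walk_weight_def card_lessThan_filter_eq_sum
  proof (intro sum.cong refl)
    fix t assume "t \<in> {..<k}"
    then show "sqrt2_weight ?A (g t) (g ((t + 1) mod k))
        = (if real_of_int (q (g t) (g ((t + 1) mod k))) \<noteq> 0 then 1 else 0)"
      using cases[of t] by auto
  qed
  also have "even \<dots>"
  proof (rule even_sqrt2_edges_of_induced_cycle[OF abs_double_cover_form_zsqrt2_le[OF sym eig eig_conj] _ _ _ k inj range])
    show "real_of_int (p i j) = real_of_int (p j i)" "real_of_int (q i j) = real_of_int (q j i)"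
      if "i < n" "j < n" for i j
      using symmetric_zsqrt2_matD[OF sym that] by simp_all
    show "real_of_int (q i i) = 0" if "i < n" for i using diag[OF that] by simp
    fix t t' assume tt: "t < k" "t' < k" "t \<noteq> t'" "t' \<noteq> (t + 1) mod k" "t \<noteq> (t' + 1) mod k"
    then have "g t \<noteq> g t'" "\<not> adj ?A (g t) (g t')" using inj induced by (auto simp: inj_on_def)
    moreover have "g t < n" "g t' < n" using range tt by auto
    ultimately have "?A $$ (g t, g t') = 0" by (auto simp: adj_def)
    then show "real_of_int (p (g t) (g t')) = 0 \<and> real_of_int (q (g t) (g t')) = 0"
      using \<open>g t < n\<close> \<open>g t' < n\<close> by (simp add: zsqrt2_mat_index of_int_add_sqrt2_eq_0_iff)
  next
    fix t assume "t < k"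
    then show "(real_of_int (q (g t) (g ((t + 1) mod k))) = 0 \<and> 1 \<le> \<bar>real_of_int (p (g t) (g ((t + 1) mod k)))\<bar>)
      \<or> (real_of_int (p (g t) (g ((t + 1) mod k))) = 0 \<and> \<bar>real_of_int (q (g t) (g ((t + 1) mod k)))\<bar> = 1)"
      using cases[of t] by auto
  qed
  finally show ?thesis .
qed

lemma even_closed_walk_sqrt2_weight:
  assumes sym: "symmetric_mat (zsqrt2_mat n p q)" and diag: "\<And>i. i < n \<Longrightarrow> q i i = 0"
    and eig: "eigs_in_interval (zsqrt2_mat n p q)" and eig_conj: "eigs_in_interval (zsqrt2_conj_mat n p q)"
    and walk: "closed_walk (adj (zsqrt2_mat n p q)) k g"
  shows "even (closed_walk_weight (sqrt2_weight (zsqrt2_mat n p q)) k g)"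
  by (rule even_closed_walk_weight[OF adj_symmetric[OF sym] _ sqrt2_weight_symmetric[OF sym]
        even_sqrt2_weight_of_induced_cycle[OF sym diag eig eig_conj] walk]) (simp_all add: adj_def)

lemma indecomposable_reachable:
  assumes "indecomposable A" "adj A u v"
  shows "(adj A)\<^sup>*\<^sup>* 0 u"
proof -
  have "0 < dim_row A" "u < dim_row A" using assms(2) by (auto simp: adj_def)
  then have "(0, u) \<in> {(x, y). adj A x y}\<^sup>*" using assms(1) unfolding indecomposable_def by blast
  then show ?thesis by (simp add: rtrancl_def)
qed

lemma similar_mat_sign_switching:
  fixes C :: "'a::comm_ring_1 mat"
  assumes C: "C \<in> carrier_mat n n" and s: "\<And>i. i < n \<Longrightarrow> s i * s i = 1"
  shows "similar_mat (mat n n (\<lambda>(i, j). s i * C $$ (i, j) * s j)) C"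
proof (rule similar_matI)
  show "{mat n n (\<lambda>(i, j). s i * C $$ (i, j) * s j), C, mat_diag n s, mat_diag n s} \<subseteq> carrier_mat n n"
    using C by auto
  have "mat_diag n s * mat_diag n s = mat_diag n (\<lambda>i. s i * s i)" by simp
  also have "\<dots> = 1\<^sub>m n" using s by (auto intro!: eq_matI simp: mat_diag_def)
  finally show "mat_diag n s * mat_diag n s = 1\<^sub>m n" "mat_diag n s * mat_diag n s = 1\<^sub>m n" by auto
  have "mat_diag n s * C * mat_diag n s = mat n n (\<lambda>(i, j). s i * C $$ (i, j)) * mat_diag n s"
    by (simp add: mat_diag_mult_left[OF C])
  also have "\<dots> = mat n n (\<lambda>(i, j). s i * C $$ (i, j) * s j)"
    by (subst mat_diag_mult_right) (auto intro!: eq_matI)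
  finally show "mat n n (\<lambda>(i, j). s i * C $$ (i, j) * s j) = mat_diag n s * C * mat_diag n s" ..
qed

lemma comm_ring_hom_poly_of_int: "comm_ring_hom (\<lambda>c::int poly. poly (map_poly real_of_int c) r)"
proof -
  interpret map_poly_comm_ring_hom real_of_int ..
  show ?thesis by unfold_locales (simp_all add: hom_distribs)
qed

text \<open>Both characteristic polynomials are images of the characteristic polynomial of the
  matrix of integer polynomials \<open>p + q X\<close>, under \<open>X \<mapsto> \<surd>2\<close> and \<open>X \<mapsto> -\<surd>2\<close>.\<close>
lemma char_poly_zsqrt2_mat_coeff_in_Ints:
  assumes "char_poly (zsqrt2_mat n p q) = char_poly (zsqrt2_conj_mat n p q)"
  shows "poly.coeff (char_poly (zsqrt2_mat n p q)) i \<in> \<int>"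
proof -
  define M :: "int poly mat" where "M = mat n n (\<lambda>(i, j). [:p i j, q i j:])"
  define h where "h r c = poly (map_poly real_of_int c) r" for r and c :: "int poly"
  have M: "M \<in> carrier_mat n n" by (simp add: M_def)
  have char_poly_h: "char_poly (map_mat (h r) M) = map_poly (h r) (char_poly M)" for r
    unfolding h_def by (rule comm_ring_hom.char_poly_hom[OF comm_ring_hom_poly_of_int M])
  have "map_mat (h (sqrt 2)) M = zsqrt2_mat n p q" "map_mat (h (- sqrt 2)) M = zsqrt2_conj_mat n p q"
    by (auto intro!: eq_matI simp: M_def h_def zsqrt2_mat_index mult.commute of_int_hom.map_poly_pCons_hom)
  then have "char_poly (zsqrt2_mat n p q) = map_poly (h (sqrt 2)) (char_poly M)"
    "char_poly (zsqrt2_conj_mat n p q) = map_poly (h (- sqrt 2)) (char_poly M)"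
    using char_poly_h by metis+
  moreover have "h r 0 = 0" for r by (simp add: h_def)
  ultimately have coeffs: "poly.coeff (char_poly (zsqrt2_mat n p q)) i = h (sqrt 2) (poly.coeff (char_poly M) i)"
    "poly.coeff (char_poly (zsqrt2_conj_mat n p q)) i = h (- sqrt 2) (poly.coeff (char_poly M) i)"
    by (simp_all add: coeff_map_poly)
  obtain a b where "h (sqrt 2) (poly.coeff (char_poly M) i) = real_of_int a + sqrt 2 * real_of_int b"
    "h (- sqrt 2) (poly.coeff (char_poly M) i) = real_of_int a - sqrt 2 * real_of_int b"
    unfolding h_def by (rule poly_of_int_at_sqrt2)
  with coeffs assms have "poly.coeff (char_poly (zsqrt2_mat n p q)) i = real_of_int a" "b = 0"
    by simp_all
  then show ?thesis by simp
qed

lemma zsqrt2_mat_eq_sign_switched_conj: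
  assumes sym: "symmetric_mat (zsqrt2_mat n p q)" and diag: "\<And>i. i < n \<Longrightarrow> q i i = 0"
    and eig: "eigs_in_interval (zsqrt2_mat n p q)" and eig_conj: "eigs_in_interval (zsqrt2_conj_mat n p q)"
    and signs: "\<And>u v. adj (zsqrt2_mat n p q) u v \<Longrightarrow> s u * s v = (-1) ^ sqrt2_weight (zsqrt2_mat n p q) u v"
    and unit: "\<And>i. \<bar>s i\<bar> = 1"
  shows "zsqrt2_mat n p q = mat n n (\<lambda>(i, j). s i * zsqrt2_conj_mat n p q $$ (i, j) * s j)"
proof (rule eq_matI)
  fix i j assume "i < dim_row (mat n n (\<lambda>(i, j). s i * zsqrt2_conj_mat n p q $$ (i, j) * s j))"
    "j < dim_col (mat n n (\<lambda>(i, j). s i * zsqrt2_conj_mat n p q $$ (i, j) * s j))"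
  then have ij: "i < n" "j < n" by auto
  have "s i * s i = 1" using unit abs_mult_self_eq[of "s i"] by simp
  then have "zsqrt2_mat n p q $$ (i, j) = s i * zsqrt2_conj_mat n p q $$ (i, j) * s j"
  proof (cases "adj (zsqrt2_mat n p q) i j")
    case True
    have switched: "s i * zsqrt2_conj_mat n p q $$ (i, j) * s j = (s i * s j) * zsqrt2_conj_mat n p q $$ (i, j)"
      by (simp add: mult_ac)
    from adj_zsqrt2_mat_cases[OF sym diag eig eig_conj True]
    consider "q i j = 0" "s i * s j = 1" | "p i j = 0" "s i * s j = -1"
      using signs[OF True] by auto
    then show ?thesis
      unfolding switched by cases (simp_all add: zsqrt2_mat_index[OF ij])
  next
    case False
    then have "i = j \<or> zsqrt2_mat n p q $$ (i, j) = 0" using ij by (auto simp: adj_def)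
    then show ?thesis
      using diag ij \<open>s i * s i = 1\<close> by (auto simp: zsqrt2_mat_index[OF ij] of_int_add_sqrt2_eq_0_iff)
  qed
  then show "zsqrt2_mat n p q $$ (i, j) = mat n n (\<lambda>(i, j). s i * zsqrt2_conj_mat n p q $$ (i, j) * s j) $$ (i, j)"
    using ij by simp
qed auto

theorem lemma12:
  fixes n :: nat and p q :: "nat \<Rightarrow> nat \<Rightarrow> int"
  defines "A \<equiv> zsqrt2_mat n p q"
  assumes sym: "symmetric_mat A"
    and indec: "indecomposable A"
    and diag_int: "\<And>i. i < n \<Longrightarrow> q i i = 0"
    and eig: "eigs_in_interval A"
    and eig_conj: "eigs_in_interval (zsqrt2_conj_mat n p q)"
  shows "(\<forall>c. is_cycle A c \<longrightarrow> even (num_sqrt2_edges A c))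
         \<and> (\<forall>i. poly.coeff (char_poly A) i \<in> \<int>)"
proof
  have closed_even: "even (closed_walk_weight (sqrt2_weight A) k g)" if "closed_walk (adj A) k g" for k g
    using even_closed_walk_sqrt2_weight[of n p q] sym eig eig_conj diag_int that unfolding A_def by blast
  then show "\<forall>c. is_cycle A c \<longrightarrow> even (num_sqrt2_edges A c)"
    using is_cycle_imp_closed_walk by metis
  obtain s :: "nat \<Rightarrow> real" where unit: "\<And>v. \<bar>s v\<bar> = 1"
    and signs: "\<And>u v. (adj A)\<^sup>*\<^sup>* 0 u \<Longrightarrow> adj A u v \<Longrightarrow> s u * s v = (-1) ^ sqrt2_weight A u v"
    using switching_signs[of "adj A" "sqrt2_weight A" 0, OF closed_even adj_symmetric[OF sym]
        sqrt2_weight_symmetric[OF sym]] by blast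
  have "A = mat n n (\<lambda>(i, j). s i * zsqrt2_conj_mat n p q $$ (i, j) * s j)"
    using signs indecomposable_reachable[OF indec] unit unfolding A_def
    by (intro zsqrt2_mat_eq_sign_switched_conj[OF sym[unfolded A_def] diag_int eig[unfolded A_def] eig_conj])
      (auto simp: A_def)
  moreover have "s i * s i = 1" for i using unit[of i] abs_mult_self_eq[of "s i"] by simp
  ultimately have "similar_mat A (zsqrt2_conj_mat n p q)"
    using similar_mat_sign_switching[of "zsqrt2_conj_mat n p q" n s] by simp
  then show "\<forall>i. poly.coeff (char_poly A) i \<in> \<int>"
    unfolding A_def by (blast intro: char_poly_zsqrt2_mat_coeff_in_Ints char_poly_similar)
qed

end
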